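(* Let $\mathcal{P}_1$ be the set of $s\in\mathcal{A}^*$ with $s_{|s|-1}<s_{|s|}=\mathsf{asc}(s)$. For every $n$ there is a bijection $\phi_1:\mathcal{A}_n\cap\mathcal{P}_1\to\mathcal{A}_{n-1}\cap\mathcal{A}^*$ such that for all $s$: $\mathsf{asc}(s)=\mathsf{asc}(\phi_1(s))+1$, $\mathsf{rmin}(s)=\mathsf{rmin}(\phi_1(s))+1$, and $\mathsf{rep},\mathsf{zero},\mathsf{max},\mathsf{ealm},\mathsf{rpos}$ take the same values on $s$ and $\phi_1(s)$.
   Context: For a sequence $s$, $\mathsf{asc}(s)=|\{i:s_i<s_{i+1}\}|$. An ascent sequence is a sequence $s=(s_1,\dots,s_n)$ of non-negative integers with $s_1=0$, $s_i\le\mathsf{asc}(s_1,\dots,s_{i-1})+1$ for $i\ge2$; $\mathcal{A}_n$ is the set of those of length $n$, $|s|$ the length; $\mathcal{A}^*$ is the set of all ascent sequences except those of the form $(0,1,\dots,|s|-1)$. $\mathsf{rep}(s)=|s|-|\{s_i\}|$; $\mathsf{zero}(s)=|\{i:s_i=0\}|$; $\mathsf{max}(s)=|\{i:s_i=i-1\}|$; $\mathsf{ealm}(s)=s_{\mathsf{max}(s)+1}$ if $\mathsf{max}(s)\ne|s|$, else $0$. A right-to-left minimum is an entry $s_i$ with $s_i<s_j$ for all $j>i$; $\mathsf{rmin}(s)$ is their number; they are indexed $0,\dots,\mathsf{rmin}(s)-1$ from left to right, with values $\mathrm{Rmin}(s)_m$ and positions $\mathrm{Prm}(s)_m$. $\mathsf{rpos}(s)$: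 $0$ if $\mathsf{rmin}(s)=|s|$; otherwise the maximal $m$ such that the value $\mathrm{Rmin}(s)_m$ occurs at least twice after position $\mathrm{Prm}(s)_{m-1}$ (for $m=0$: at least twice in $s$), and $0$ if none. *)

theory Defs
  imports Main
begin

text \<open>Sequences are lists of naturals; list index i (0-based) corresponds to paper index i+1.\<close>

definition asc :: "nat list \<Rightarrow> nat" where
  "asc s = card {i. Suc i < length s \<and> s ! i < s ! Suc i}"

definition is_ascent :: "nat list \<Rightarrow> bool" where
  "is_ascent s \<longleftrightarrow> s \<noteq> [] \<and> s ! 0 = 0 \<and>
     (\<forall>i. 1 \<le> i \<and> i < length s \<longrightarrow> s ! i \<le> asc (take i s) + 1)"

definition ascA :: "nat \<Rightarrow> nat list set" where
  "ascA n = {s. is_ascent s \<and> length s = n}"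

definition ascAstar :: "nat list set" where
  "ascAstar = {s. is_ascent s \<and> s \<noteq> [0..<length s]}"

definition st_rep :: "nat list \<Rightarrow> nat" where
  "st_rep s = length s - card (set s)"

definition st_zero :: "nat list \<Rightarrow> nat" where
  "st_zero s = card {i. i < length s \<and> s ! i = 0}"

text \<open>Paper: s_i = i - 1 (1-based), i.e. s ! i = i (0-based).\<close>
definition st_max :: "nat list \<Rightarrow> nat" where
  "st_max s = card {i. i < length s \<and> s ! i = i}"

text \<open>Paper: s_{max(s)+1} (1-based) = s ! max(s) (0-based).\<close>
definition st_ealm :: "nat list \<Rightarrow> nat" where
  "st_ealm s = (if st_max s \<noteq> length s then s ! st_max s else 0)"

definition Prm :: "nat list \<Rightarrow> nat list" where
  "Prm s = filter (\<lambda>i. \<forall>j. i < j \<and> j < length s \<longrightarrow> s ! i < s ! j) [0..<length s]"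

definition st_rmin :: "nat list \<Rightarrow> nat" where
  "st_rmin s = length (Prm s)"

definition Rmin :: "nat list \<Rightarrow> nat \<Rightarrow> nat" where
  "Rmin s m = s ! (Prm s ! m)"

definition rpos_ok :: "nat list \<Rightarrow> nat \<Rightarrow> bool" where
  "rpos_ok s m \<longleftrightarrow> m < st_rmin s \<and>
     (if m = 0 then 2 \<le> card {j. j < length s \<and> s ! j = Rmin s 0}
      else 2 \<le> card {j. Prm s ! (m - 1) < j \<and> j < length s \<and> s ! j = Rmin s m})"

definition st_rpos :: "nat list \<Rightarrow> nat" where
  "st_rpos s = (if st_rmin s = length s then 0
               else if \<exists>m. rpos_ok s m then Max {m. rpos_ok s m} else 0)"

definition ascP1 :: "nat list set" where
  "ascP1 = {s. s \<in> ascAstar \<and> 2 \<le> length s \<and>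
              s ! (length s - 2) < s ! (length s - 1) \<and> s ! (length s - 1) = asc s}"

end

theory Submission imports Defs begin

text \<open>The bijection deletes the last entry. If s in P1 ends at an ascent with the value asc s,
  that value is asc t + 1 for t = butlast s; conversely, appending asc t + 1 to any t in A* keeps
  an ascent sequence, which lies in A* because t does. The appended entry exceeds every entry of t,
  so it adds one ascent and one right-to-left minimum, and it creates no repetition, no zero and no
  repeated right-to-left minimum. Nor does it create a new entry with s_i = i - 1: for an ascent
  sequence, asc t + 1 = |t| would force t = (0, 1, ..., |t| - 1).\<close>

lemma asc_snoc:
  assumes "t \<noteq> []"
  shows "asc (t @ [x]) = asc t + (if last t < x then 1 else 0)"
proof -
  let ?S = "{i. Suc i < length t \<and> t ! i < t ! Suc i}"
  have "{i. Suc i < length (t @ [x]) \<and> (t @ [x]) ! i < (t @ [x]) ! Suc i}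
        = ?S \<union> (if last t < x then {length t - 1} else {})"
    using assms by (cases t rule: rev_cases) (auto simp: nth_append less_Suc_eq)
  moreover have "finite ?S" by (rule finite_subset[of _ "{..<length t}"]) auto
  moreover have "length t - 1 \<notin> ?S" by auto
  ultimately show ?thesis unfolding asc_def by auto
qed

lemma asc_take_le: "asc (take k t) \<le> asc t"
  unfolding asc_def by (rule card_mono) (auto intro: finite_subset[of _ "{..<length t}"])

lemma asc_le_length: "asc t \<le> length t - 1"
proof -
  have "asc t \<le> card {..<length t - 1}"
    unfolding asc_def by (rule card_mono) auto
  then show ?thesis by simp
qed

lemma asc_upt: "asc [0..<k] = k - 1"
proof -
  have "{i. Suc i < length [0..<k] \<and> [0..<k] ! i < [0..<k] ! Suc i} = {..<k - 1}" by auto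
  then show ?thesis unfolding asc_def by simp
qed

lemma ascent_nth_le_asc_take:
  assumes "is_ascent t" "i < length t"
  shows "t ! i \<le> asc (take (Suc i) t)"
  using assms(2)
proof (induction i)
  case 0
  then show ?case using assms(1) by (simp add: is_ascent_def)
next
  case (Suc i)
  have ih: "t ! i \<le> asc (take (Suc i) t)" using Suc by simp
  have bound: "t ! Suc i \<le> asc (take (Suc i) t) + 1"
    using assms(1) Suc.prems unfolding is_ascent_def by auto
  have ne: "take (Suc i) t \<noteq> []" using Suc.prems by (cases t) auto
  have last: "last (take (Suc i) t) = t ! i" using Suc.prems by (simp add: take_Suc_conv_app_nth)
  have "take (Suc (Suc i)) t = take (Suc i) t @ [t ! Suc i]"
    using Suc.prems by (simp add: take_Suc_conv_app_nth)
  then show ?case using asc_snoc[OF ne, of "t ! Suc i"] ih bound last by auto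
qed

lemma ascent_set_le_asc:
  assumes "is_ascent t" "x \<in> set t"
  shows "x \<le> asc t"
proof -
  obtain i where "i < length t" "x = t ! i" using assms(2) by (auto simp: in_set_conv_nth)
  then show ?thesis using ascent_nth_le_asc_take[OF assms(1)] asc_take_le le_trans by metis
qed

lemma is_ascent_snoc_iff:
  assumes "t \<noteq> []"
  shows "is_ascent (t @ [x]) \<longleftrightarrow> is_ascent t \<and> x \<le> asc t + 1"
proof -
  have prefix: "(t @ [x]) ! i = t ! i" "take i (t @ [x]) = take i t" if "i < length t" for i
    using that by (auto simp: nth_append)
  have "(\<forall>i. 1 \<le> i \<and> i < length (t @ [x]) \<longrightarrow> (t @ [x]) ! i \<le> asc (take i (t @ [x])) + 1)
    \<longleftrightarrow> (\<forall>i. 1 \<le> i \<and> i < length t \<longrightarrow> t ! i \<le> asc (take i t) + 1) \<and> x \<le> asc t + 1"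
    using assms prefix by (auto simp: less_Suc_eq Suc_le_eq)
  moreover have "(t @ [x]) ! 0 = t ! 0" using assms prefix by simp
  ultimately show ?thesis unfolding is_ascent_def using assms by auto
qed

lemma ascent_eq_upt_if_asc_eq:
  assumes "is_ascent t" "asc t = length t - 1"
  shows "t = [0..<length t]"
proof -
  have ascents: "{i. Suc i < length t \<and> t ! i < t ! Suc i} = {..<length t - 1}"
    using assms(2) unfolding asc_def by (intro card_subset_eq) auto
  have step: "t ! i < t ! Suc i" if "Suc i < length t" for i
  proof -
    have "i \<in> {..<length t - 1}" using that by simp
    then show ?thesis unfolding ascents[symmetric] by simp
  qed
  have ge: "i \<le> t ! i" if "i < length t" for i
    using that
  proof (induction i)
    case (Suc i)
    then show ?case using step[of i] by simp
  qed simp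
  have le: "t ! i \<le> i" if "i < length t" for i
    using ascent_nth_le_asc_take[OF assms(1) that] asc_le_length[of "take (Suc i) t"] that by simp
  show ?thesis by (rule nth_equalityI) (simp_all add: le_antisym ge le)
qed

lemma st_rep_snoc_notin:
  assumes "a \<notin> set t"
  shows "st_rep (t @ [a]) = st_rep t"
  using assms card_length[of t] unfolding st_rep_def by simp

lemma st_zero_snoc_pos:
  assumes "0 < a"
  shows "st_zero (t @ [a]) = st_zero t"
proof -
  have "{i. i < length (t @ [a]) \<and> (t @ [a]) ! i = 0} = {i. i < length t \<and> t ! i = 0}"
    using assms by (auto simp: nth_append less_Suc_eq)
  then show ?thesis unfolding st_zero_def by simp
qed

lemma st_max_snoc:
  assumes "a \<noteq> length t"
  shows "st_max (t @ [a]) = st_max t"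
proof -
  have "{i. i < length (t @ [a]) \<and> (t @ [a]) ! i = i} = {i. i < length t \<and> t ! i = i}"
    using assms by (auto simp: nth_append less_Suc_eq)
  then show ?thesis unfolding st_max_def by simp
qed

lemma st_max_le_length: "st_max t \<le> length t"
proof -
  have "st_max t \<le> card {..<length t}" unfolding st_max_def by (rule card_mono) auto
  then show ?thesis by simp
qed

lemma st_max_eq_length_iff: "st_max t = length t \<longleftrightarrow> t = [0..<length t]"
proof
  assume "st_max t = length t"
  then have "{i. i < length t \<and> t ! i = i} = {..<length t}"
    unfolding st_max_def by (intro card_subset_eq) auto
  then show "t = [0..<length t]" by (intro nth_equalityI) auto
next
  assume upt: "t = [0..<length t]"
  have "t ! i = i" if "i < length t" for i
    using that by (subst upt) simp
  then have "{i. i < length t \<and> t ! i = i} = {..<length t}" by auto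
  then show "st_max t = length t" unfolding st_max_def by simp
qed

lemma st_ealm_snoc:
  assumes "t \<noteq> [0..<length t]" "a \<noteq> length t"
  shows "st_ealm (t @ [a]) = st_ealm t"
proof -
  have "st_max t < length t"
    using assms(1) st_max_le_length[of t] st_max_eq_length_iff[of t] by linarith
  then show ?thesis
    unfolding st_ealm_def st_max_snoc[OF assms(2)] by (simp add: nth_append)
qed

lemma Prm_nth_less_length: "m < length (Prm t) \<Longrightarrow> Prm t ! m < length t"
  using nth_mem[of m "Prm t"] unfolding Prm_def by simp

lemma Prm_snoc_greater:
  assumes "\<forall>x \<in> set t. x < a"
  shows "Prm (t @ [a]) = Prm t @ [length t]"
proof -
  have "(\<forall>j. i < j \<and> j < length (t @ [a]) \<longrightarrow> (t @ [a]) ! i < (t @ [a]) ! j)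
        \<longleftrightarrow> (\<forall>j. i < j \<and> j < length t \<longrightarrow> t ! i < t ! j)" if "i < length t" for i
    using that assms by (auto simp: nth_append less_Suc_eq)
  then have "filter (\<lambda>i. \<forall>j. i < j \<and> j < length (t @ [a]) \<longrightarrow> (t @ [a]) ! i < (t @ [a]) ! j) [0..<length t]
      = filter (\<lambda>i. \<forall>j. i < j \<and> j < length t \<longrightarrow> t ! i < t ! j) [0..<length t]"
    by (intro filter_cong) simp_all
  then show ?thesis unfolding Prm_def by simp
qed

lemma st_rmin_snoc_greater:
  assumes "\<forall>x \<in> set t. x < a"
  shows "st_rmin (t @ [a]) = st_rmin t + 1"
  unfolding st_rmin_def Prm_snoc_greater[OF assms] by simp

lemma rpos_ok_snoc_greater:
  assumes greater: "\<forall>x \<in> set t. x < a"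
  shows "rpos_ok (t @ [a]) m \<longleftrightarrow> rpos_ok t m"
proof (cases "m < st_rmin t")
  case True
  then have m: "m < length (Prm t)" by (simp add: st_rmin_def)
  have Prm_eq: "Prm (t @ [a]) ! k = Prm t ! k" if "k \<le> m" for k
    using m that by (simp add: Prm_snoc_greater[OF greater] nth_append)
  have Rmin_eq: "Rmin (t @ [a]) k = Rmin t k" and Rmin_less: "Rmin t k < a" if "k \<le> m" for k
    using that m Prm_eq Prm_nth_less_length[of k t] greater
    by (auto simp: Rmin_def nth_append)
  have "{j. p < j \<and> j < length (t @ [a]) \<and> (t @ [a]) ! j = Rmin t k}
      = {j. p < j \<and> j < length t \<and> t ! j = Rmin t k}"
    "{j. j < length (t @ [a]) \<and> (t @ [a]) ! j = Rmin t k} = {j. j < length t \<and> t ! j = Rmin t k}"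
    if "k \<le> m" for p k
    using Rmin_less[OF that] by (auto simp: nth_append less_Suc_eq)
  then show ?thesis
    using True Prm_eq Rmin_eq
    by (simp add: rpos_ok_def st_rmin_snoc_greater[OF greater])
next
  case False
  have "a \<notin> set t" using greater by blast
  then have "{j. P j \<and> j < length (t @ [a]) \<and> (t @ [a]) ! j = a} \<subseteq> {length t}" for P
    by (auto simp: nth_append less_Suc_eq)
  then have a_once: "card {j. P j \<and> j < length (t @ [a]) \<and> (t @ [a]) ! j = a} \<le> 1" for P
    using card_mono[of "{length t}"] by fastforce
  have "Rmin (t @ [a]) (st_rmin t) = a"
    by (simp add: Rmin_def st_rmin_def Prm_snoc_greater[OF greater])
  then have "\<not> rpos_ok (t @ [a]) (st_rmin t)"
    using a_once[of "\<lambda>_. True"] a_once[of "\<lambda>j. Prm (t @ [a]) ! (st_rmin t - 1) < j"]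
    by (cases "st_rmin t = 0") (simp_all add: rpos_ok_def)
  then have "\<not> rpos_ok (t @ [a]) m"
    using False by (auto simp: rpos_ok_def st_rmin_snoc_greater[OF greater] less_Suc_eq)
  moreover have "\<not> rpos_ok t m" using False by (simp add: rpos_ok_def)
  ultimately show ?thesis by simp
qed

lemma st_rpos_snoc_greater:
  assumes "\<forall>x \<in> set t. x < a"
  shows "st_rpos (t @ [a]) = st_rpos t"
  unfolding st_rpos_def st_rmin_snoc_greater[OF assms] rpos_ok_snoc_greater[OF assms] by simp

lemma statistics_snoc_Suc_asc:
  assumes ascent: "is_ascent t" and not_upt: "t \<noteq> [0..<length t]"
  defines "s \<equiv> t @ [asc t + 1]"
  shows "asc s = asc t + 1 \<and> st_rmin s = st_rmin t + 1 \<and>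
    st_rep s = st_rep t \<and> st_zero s = st_zero t \<and>
    st_max s = st_max t \<and> st_ealm s = st_ealm t \<and> st_rpos s = st_rpos t"
proof -
  have ne: "t \<noteq> []" using ascent by (simp add: is_ascent_def)
  have greater: "\<forall>x \<in> set t. x < asc t + 1"
    using ascent_set_le_asc[OF ascent] by (simp add: le_imp_less_Suc)
  have "asc t \<noteq> length t - 1" using ascent_eq_upt_if_asc_eq[OF ascent] not_upt by blast
  then have "asc t + 1 \<noteq> length t" by linarith
  moreover have "asc s = asc t + 1"
    unfolding s_def using asc_snoc[OF ne] greater ne by simp
  ultimately show ?thesis
    unfolding s_def
    using st_rmin_snoc_greater[OF greater] st_rep_snoc_notin[of "asc t + 1" t] greater
      st_zero_snoc_pos[of "asc t + 1" t] st_max_snoc[of "asc t + 1" t]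
      st_ealm_snoc[OF not_upt] st_rpos_snoc_greater[OF greater]
    by auto
qed

lemma ascA_0: "ascA 0 = {}"
  by (auto simp: ascA_def is_ascent_def)

lemma snoc_Suc_asc_in_ascP1:
  assumes "t \<in> ascA m \<inter> ascAstar"
  shows "t @ [asc t + 1] \<in> ascA (Suc m) \<inter> ascP1"
proof -
  have ascent: "is_ascent t" and not_upt: "t \<noteq> [0..<length t]" and len: "length t = m"
    using assms by (auto simp: ascA_def ascAstar_def)
  have ne: "t \<noteq> []" using ascent by (simp add: is_ascent_def)
  have last_less: "last t < asc t + 1"
    using ascent_set_le_asc[OF ascent, of "last t"] ne by simp
  have "is_ascent (t @ [asc t + 1])" using is_ascent_snoc_iff[OF ne] ascent by simp
  moreover have "asc (t @ [asc t + 1]) = asc t + 1" using asc_snoc[OF ne] last_less by simp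
  moreover have "t @ [asc t + 1] \<noteq> [0..<length (t @ [asc t + 1])]"
  proof
    assume "t @ [asc t + 1] = [0..<length (t @ [asc t + 1])]"
    then have "take (length t) (t @ [asc t + 1]) = take (length t) [0..<Suc (length t)]" by simp
    with not_upt show False by simp
  qed
  moreover have "(t @ [asc t + 1]) ! (length t - 1) = last t"
    using ne by (simp add: nth_append last_conv_nth)
  moreover have "Suc (length t) - 2 = length t - 1" by simp
  ultimately show ?thesis
    using ne last_less by (simp add: ascA_def ascP1_def ascAstar_def Suc_le_eq flip: len)
qed

lemma ascP1_eq_snoc_butlast:
  assumes "s \<in> ascP1"
  shows "butlast s \<in> ascAstar" and "s = butlast s @ [asc (butlast s) + 1]"
proof -
  have ascent: "is_ascent s" and not_upt: "s \<noteq> [0..<length s]" and len: "2 \<le> length s"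
    and ends_ascent: "s ! (length s - 2) < s ! (length s - 1)"
    and last_asc: "s ! (length s - 1) = asc s"
    using assms by (auto simp: ascP1_def ascAstar_def)
  obtain t x where s: "s = t @ [x]" using len by (cases s rule: rev_cases) auto
  have ne: "t \<noteq> []" using len s by auto
  have "last t < x"
    using ends_ascent ne by (simp add: s nth_append last_conv_nth numeral_2_eq_2)
  then have x: "x = asc t + 1"
    using last_asc asc_snoc[OF ne, of x] by (simp add: s)
  have "is_ascent t" using ascent is_ascent_snoc_iff[OF ne] by (simp add: s)
  moreover have "t \<noteq> [0..<length t]"
  proof
    assume "t = [0..<length t]"
    then have "s = [0..<length s]" using asc_upt[of "length t"] ne by (simp add: s x)
    with not_upt show False by simp
  qed
  ultimately show "butlast s \<in> ascAstar" "s = butlast s @ [asc (butlast s) + 1]"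
    by (simp_all add: s x ascAstar_def)
qed

lemma bij_betw_butlast_ascP1:
  "bij_betw butlast (ascA n \<inter> ascP1) (ascA (n - 1) \<inter> ascAstar)"
proof (rule bij_betw_byWitness[where f' = "\<lambda>t. t @ [asc t + 1]"])
  show "\<forall>s \<in> ascA n \<inter> ascP1. butlast s @ [asc (butlast s) + 1] = s"
    using ascP1_eq_snoc_butlast(2) by auto
  show "\<forall>t \<in> ascA (n - 1) \<inter> ascAstar. butlast (t @ [asc t + 1]) = t" by simp
  show "butlast ` (ascA n \<inter> ascP1) \<subseteq> ascA (n - 1) \<inter> ascAstar"
    using ascP1_eq_snoc_butlast(1) by (auto simp: ascA_def ascAstar_def)
  show "(\<lambda>t. t @ [asc t + 1]) ` (ascA (n - 1) \<inter> ascAstar) \<subseteq> ascA n \<inter> ascP1"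
    using snoc_Suc_asc_in_ascP1 by (cases n) (auto simp: ascA_0)
qed

lemma statistics_butlast_ascP1:
  assumes "s \<in> ascP1"
  shows "asc s = asc (butlast s) + 1 \<and> st_rmin s = st_rmin (butlast s) + 1 \<and>
    st_rep s = st_rep (butlast s) \<and> st_zero s = st_zero (butlast s) \<and>
    st_max s = st_max (butlast s) \<and> st_ealm s = st_ealm (butlast s) \<and>
    st_rpos s = st_rpos (butlast s)"
proof -
  have "is_ascent (butlast s)" "butlast s \<noteq> [0..<length (butlast s)]"
    using ascP1_eq_snoc_butlast(1)[OF assms] by (auto simp: ascAstar_def)
  from statistics_snoc_Suc_asc[OF this] show ?thesis
    unfolding ascP1_eq_snoc_butlast(2)[OF assms, symmetric] .
qed

theorem mainTheorem10:
  fixes n :: nat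
  shows "\<exists>\<phi>. bij_betw \<phi> (ascA n \<inter> ascP1) (ascA (n - 1) \<inter> ascAstar) \<and>
    (\<forall>s \<in> ascA n \<inter> ascP1.
       asc s = asc (\<phi> s) + 1 \<and> st_rmin s = st_rmin (\<phi> s) + 1 \<and>
       st_rep s = st_rep (\<phi> s) \<and> st_zero s = st_zero (\<phi> s) \<and>
       st_max s = st_max (\<phi> s) \<and> st_ealm s = st_ealm (\<phi> s) \<and>
       st_rpos s = st_rpos (\<phi> s))"
  using bij_betw_butlast_ascP1 statistics_butlast_ascP1 by blast

end
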